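(* Let $N>0$ and $\tau\in(0,1)$. (i) The following are equivalent: $\underline\beta_1(\tau)<4(N+1)$; $4(N+1)-\tau\beta_2^*(\tau)>2(N+1)>\beta_1^{**}(\tau)-\tau\beta_2^*(\tau)$; $\beta_1^{**}(\tau)<4(N+1)$; $\tau\in(0,\tau_0^{(1)})$. Moreover, for every $\tau\in(0,\tau_0^{(1)})$: $$\underline\beta_1(\tau)<4(N+1)=\varphi_2^+(\beta_2^*(\tau)),\quad\text{equivalently}\quad \beta_2^*(\tau)=\varphi_1^+(4(N+1))<\overline\beta_2(\tau),$$ and $\beta_1^{**}(\tau)=\varphi_2^-(\beta_2^*(\tau))<\underline\beta_1(\tau)$. (ii) The following are equivalent: $\underline\beta_2(\tau)<4$; $4-\tau\beta_1^*(\tau)>2>\beta_2^{**}(\tau)-\tau\beta_1^*(\tau)$; $\beta_2^{**}(\tau)<4$; $\tau\in(0,\tau_0^{(2)})$. Moreover, for every $\tau\in(0,\tau_0^{(2)})$: $$\underline\beta_2(\tau)<4=\varphi_1^+(\beta_1^*(\tau)),\quad\text{equivalently}\quad \beta_1^*(\tau)=\varphi_2^+(4)<\overline\beta_1(\tau),$$ and $\beta_2^{**}(\tau)=\varphi_1^-(\beta_1^*(\tau))<\underline\beta_2(\tau)$.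
   Context: With $D=(N+1)^2+2\tau(N+1)+1$: $$\underline\beta_1(\tau)=\tfrac{2}{1-\tau^2}(N+1+\tau+\tau\sqrt D),\qquad \overline\beta_1(\tau)=\tfrac{2}{1-\tau^2}(N+1+\tau+\sqrt D),$$ $$\underline\beta_2(\tau)=\tfrac{2}{1-\tau^2}(1+\tau(N+1)+\tau\sqrt D),\qquad \overline\beta_2(\tau)=\tfrac{2}{1-\tau^2}(1+\tau(N+1)+\sqrt D);$$ $$\beta_1^*(\tau)=4(N+1)+8\tau,\quad \beta_2^*(\tau)=4+8\tau(N+1),\quad \beta_1^{**}(\tau)=8\tau(1+2\tau(N+1)),\quad \beta_2^{**}(\tau)=8\tau(N+1+2\tau);$$ $$\tau_0^{(1)}=\frac{N+1}{1+\sqrt{1+4(N+1)^2}},\qquad \tau_0^{(2)}=\frac{1}{N+1+\sqrt{(N+1)^2+4}};$$ $$\varphi_1^\pm(\beta_1)=2+\tau\beta_1\pm\sqrt{(2+\tau\beta_1)^2-\beta_1(\beta_1-4(N+1))}\quad (0<\beta_1\le\overline\beta_1(\tau)),$$ $$\varphi_2^\pm(\beta_2)=2(N+1)+\tau\beta_2\pm\sqrt{(2(N+1)+\tau\beta_2)^2-\beta_2(\beta_2-4)}\quad (0<\beta_2\le\overline\beta_2(\tau)).$$ *)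

theory Defs
  imports Complex_Main
begin

definition DD :: "nat \<Rightarrow> real \<Rightarrow> real" where
  "DD N t = (real N + 1)^2 + 2 * t * (real N + 1) + 1"

definition beta1_lo :: "nat \<Rightarrow> real \<Rightarrow> real" where
  "beta1_lo N t = 2 / (1 - t^2) * (real N + 1 + t + t * sqrt (DD N t))"
definition beta1_hi :: "nat \<Rightarrow> real \<Rightarrow> real" where
  "beta1_hi N t = 2 / (1 - t^2) * (real N + 1 + t + sqrt (DD N t))"
definition beta2_lo :: "nat \<Rightarrow> real \<Rightarrow> real" where
  "beta2_lo N t = 2 / (1 - t^2) * (1 + t * (real N + 1) + t * sqrt (DD N t))"
definition beta2_hi :: "nat \<Rightarrow> real \<Rightarrow> real" where
  "beta2_hi N t = 2 / (1 - t^2) * (1 + t * (real N + 1) + sqrt (DD N t))"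

definition beta1_star :: "nat \<Rightarrow> real \<Rightarrow> real" where
  "beta1_star N t = 4 * (real N + 1) + 8 * t"
definition beta2_star :: "nat \<Rightarrow> real \<Rightarrow> real" where
  "beta2_star N t = 4 + 8 * t * (real N + 1)"
definition beta1_sstar :: "nat \<Rightarrow> real \<Rightarrow> real" where
  "beta1_sstar N t = 8 * t * (1 + 2 * t * (real N + 1))"
definition beta2_sstar :: "nat \<Rightarrow> real \<Rightarrow> real" where
  "beta2_sstar N t = 8 * t * (real N + 1 + 2 * t)"

definition tau0_1 :: "nat \<Rightarrow> real" where
  "tau0_1 N = (real N + 1) / (1 + sqrt (1 + 4 * (real N + 1)^2))"
definition tau0_2 :: "nat \<Rightarrow> real" where
  "tau0_2 N = 1 / (real N + 1 + sqrt ((real N + 1)^2 + 4))"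

text \<open>phi functions (meaningful for 0 < b <= the corresponding upper beta).\<close>
definition phi1_plus :: "nat \<Rightarrow> real \<Rightarrow> real \<Rightarrow> real" where
  "phi1_plus N t b = 2 + t * b + sqrt ((2 + t * b)^2 - b * (b - 4 * (real N + 1)))"
definition phi1_minus :: "nat \<Rightarrow> real \<Rightarrow> real \<Rightarrow> real" where
  "phi1_minus N t b = 2 + t * b - sqrt ((2 + t * b)^2 - b * (b - 4 * (real N + 1)))"
definition phi2_plus :: "nat \<Rightarrow> real \<Rightarrow> real \<Rightarrow> real" where
  "phi2_plus N t b = 2 * (real N + 1) + t * b + sqrt ((2 * (real N + 1) + t * b)^2 - b * (b - 4))"
definition phi2_minus :: "nat \<Rightarrow> real \<Rightarrow> real \<Rightarrow> real" where
  "phi2_minus N t b = 2 * (real N + 1) + t * b - sqrt ((2 * (real N + 1) + t * b)^2 - b * (b - 4))"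

end

theory Submission imports Defs begin

text \<open>All quantities of the theorem are specialisations of expressions in two parameters
  \<open>a > 0\<close>, \<open>b \<ge> 0\<close>: part (i) is the case \<open>(a, b) = (N + 1, 1)\<close> and part (ii) the case
  \<open>(a, b) = (1, N + 1)\<close>. Each condition in the chain of equivalences reduces to the sign of
  \<open>tau0_poly a b t = a - 2 b t - 4 a t\<^sup>2\<close>, whose positive root is \<open>tau0 a b\<close>: for the
  conditions involving a square root one squares both sides, and the difference of the squares
  has this polynomial as a factor. For the remaining claims, \<open>beta_hi a b t\<close> is the larger
  root of the concave quadratic \<open>phi_disc a b t\<close> (the radicand of \<open>phi_plus a b t\<close>),
  \<open>phi_disc b a t (beta_star b a t)\<close> is \<open>(2 * tau0_poly a b t)\<^sup>2\<close>, and
  \<open>beta_lo a b t = 2 a + t * beta_hi b a t\<close>.\<close>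

definition beta_disc :: "real \<Rightarrow> real \<Rightarrow> real \<Rightarrow> real" where
  "beta_disc a b t = a^2 + 2 * t * a * b + b^2"

definition beta_lo :: "real \<Rightarrow> real \<Rightarrow> real \<Rightarrow> real" where
  "beta_lo a b t = 2 / (1 - t^2) * (a + t * b + t * sqrt (beta_disc a b t))"

definition beta_hi :: "real \<Rightarrow> real \<Rightarrow> real \<Rightarrow> real" where
  "beta_hi a b t = 2 / (1 - t^2) * (a + t * b + sqrt (beta_disc a b t))"

definition beta_star :: "real \<Rightarrow> real \<Rightarrow> real \<Rightarrow> real" where
  "beta_star a b t = 4 * a + 8 * t * b"

definition beta_sstar :: "real \<Rightarrow> real \<Rightarrow> real \<Rightarrow> real" where
  "beta_sstar a b t = 8 * t * (b + 2 * t * a)"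

definition phi_disc :: "real \<Rightarrow> real \<Rightarrow> real \<Rightarrow> real \<Rightarrow> real" where
  "phi_disc a b t x = (2 * b + t * x)^2 - x * (x - 4 * a)"

definition phi_plus :: "real \<Rightarrow> real \<Rightarrow> real \<Rightarrow> real \<Rightarrow> real" where
  "phi_plus a b t x = 2 * b + t * x + sqrt (phi_disc a b t x)"

definition phi_minus :: "real \<Rightarrow> real \<Rightarrow> real \<Rightarrow> real \<Rightarrow> real" where
  "phi_minus a b t x = 2 * b + t * x - sqrt (phi_disc a b t x)"

definition tau0_poly :: "real \<Rightarrow> real \<Rightarrow> real \<Rightarrow> real" where
  "tau0_poly a b t = a - 2 * b * t - 4 * a * t^2"

definition tau0 :: "real \<Rightarrow> real \<Rightarrow> real" where
  "tau0 a b = a / (b + sqrt (b^2 + 4 * a^2))"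

lemma less_iff_pos_of_square_diff:
  fixes x y c g p :: real
  assumes "0 \<le> y" and "x^2 - y^2 = c * g" and "0 < c" and "x = g + p" and "0 < p"
  shows "y < x \<longleftrightarrow> 0 < g"
proof
  assume "y < x"
  then have "y^2 < x^2" using \<open>0 \<le> y\<close> by (simp add: power_strict_mono)
  then have "0 < c * g" using assms(2) by linarith
  then show "0 < g" using assms(3) by (simp add: zero_less_mult_iff)
next
  assume "0 < g"
  then have "0 < c * g" using assms(3) by simp
  then have "y^2 < x^2" using assms(2) by linarith
  moreover have "0 \<le> x" using \<open>0 < g\<close> assms(4,5) by linarith
  ultimately show "y < x" by (rule power_less_imp_less_base)
qed

lemma beta_lo_less_iff:
  assumes "0 < a" "0 \<le> b" "0 < t" "t < 1"
  shows "beta_lo a b t < 4 * a \<longleftrightarrow> 0 < tau0_poly a b t"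
proof -
  define D where "D = beta_disc a b t"
  have "0 \<le> D" using assms by (simp add: D_def beta_disc_def)
  have c: "0 < 1 - t^2" using assms by (simp add: abs_square_less_1)
  have "beta_lo a b t < 4 * a \<longleftrightarrow> 2 * (a + t * b + t * sqrt D) < 4 * a * (1 - t^2)"
    using c by (simp add: beta_lo_def D_def field_simps)
  also have "\<dots> \<longleftrightarrow> t * sqrt D < a - t * b - 2 * a * t^2" by argo
  also have "\<dots> \<longleftrightarrow> 0 < tau0_poly a b t"
  proof (rule less_iff_pos_of_square_diff)
    show "0 \<le> t * sqrt D" using \<open>0 \<le> D\<close> assms by simp
    show "(a - t * b - 2 * a * t^2)^2 - (t * sqrt D)^2 = a * (1 - t^2) * tau0_poly a b t"
      using \<open>0 \<le> D\<close> by (simp add: power_mult_distrib D_def beta_disc_def tau0_poly_def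
          power2_eq_square algebra_simps)
    show "0 < a * (1 - t^2)" using assms c by simp
    show "a - t * b - 2 * a * t^2 = tau0_poly a b t + (t * b + 2 * a * t^2)"
      by (simp add: tau0_poly_def)
    show "0 < t * b + 2 * a * t^2" using assms by (simp add: add_nonneg_pos)
  qed
  finally show ?thesis .
qed

lemma less_tau0_iff:
  assumes "0 < a" "0 \<le> b" "0 < t"
  shows "t < tau0 a b \<longleftrightarrow> 0 < tau0_poly a b t"
proof -
  define s where "s = sqrt (b^2 + 4 * a^2)"
  have "\<bar>b\<bar> < s" unfolding s_def using assms by (simp add: real_less_rsqrt)
  then have "t < tau0 a b \<longleftrightarrow> t * (b + s) < a"
    by (simp add: tau0_def s_def[symmetric] pos_less_divide_eq)
  also have "\<dots> \<longleftrightarrow> t * s < a - t * b" by argo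
  also have "\<dots> \<longleftrightarrow> 0 < tau0_poly a b t"
  proof (rule less_iff_pos_of_square_diff)
    show "0 \<le> t * s" using assms by (simp add: s_def)
    show "(a - t * b)^2 - (t * s)^2 = a * tau0_poly a b t"
      by (simp add: s_def power_mult_distrib tau0_poly_def power2_eq_square algebra_simps)
    show "a - t * b = tau0_poly a b t + (t * b + 4 * a * t^2)"
      by (simp add: tau0_poly_def)
    show "0 < t * b + 4 * a * t^2"
      using assms by (simp add: add_nonneg_pos)
  qed (use assms in simp)
  finally show ?thesis .
qed

lemma beta_sstar_less_iff: "beta_sstar a b t < 4 * a \<longleftrightarrow> 0 < tau0_poly a b t"
  by (simp add: beta_sstar_def tau0_poly_def power2_eq_square algebra_simps, linarith)

lemma beta_star_gap_iff:
  "(4 * a - t * beta_star b a t > 2 * a \<and> 2 * a > beta_sstar a b t - t * beta_star b a t)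
     \<longleftrightarrow> 0 < tau0_poly a b t"
  by (simp add: beta_star_def beta_sstar_def tau0_poly_def power2_eq_square algebra_simps, linarith)

lemma beta_disc_commute: "beta_disc b a t = beta_disc a b t"
  by (simp add: beta_disc_def algebra_simps)

lemma beta_lo_eq: "t^2 \<noteq> 1 \<Longrightarrow> beta_lo a b t = 2 * a + t * beta_hi b a t"
  by (simp add: beta_lo_def beta_hi_def beta_disc_commute field_simps power2_eq_square)

lemma less_beta_hi_if_phi_disc_pos:
  assumes "t^2 < 1" and "0 < phi_disc a b t x"
  shows "x < beta_hi a b t"
proof -
  define y where "y = (1 - t^2) * x / 2 - (a + t * b)"
  have "4 * (beta_disc a b t - y^2) = (1 - t^2) * phi_disc a b t x"
    by (simp add: y_def beta_disc_def phi_disc_def power2_eq_square field_simps)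
  also have "\<dots> > 0" using assms by simp
  finally have "y < sqrt (beta_disc a b t)" by (intro real_less_rsqrt) simp
  with \<open>t^2 < 1\<close> show ?thesis by (simp add: beta_hi_def y_def field_simps)
qed

lemma phi_disc_beta_star: "phi_disc b a t (beta_star b a t) = (2 * tau0_poly a b t)^2"
  by (simp add: phi_disc_def beta_star_def tau0_poly_def power2_eq_square algebra_simps)

lemma sqrt_phi_disc_beta_star:
  "0 \<le> tau0_poly a b t \<Longrightarrow> sqrt (phi_disc b a t (beta_star b a t)) = 2 * tau0_poly a b t"
  unfolding phi_disc_beta_star real_sqrt_abs by simp

lemma phi_plus_beta_star:
  "0 \<le> tau0_poly a b t \<Longrightarrow> phi_plus b a t (beta_star b a t) = 4 * a"
  by (simp add: phi_plus_def sqrt_phi_disc_beta_star)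
    (simp add: beta_star_def tau0_poly_def algebra_simps power2_eq_square)

lemma phi_minus_beta_star:
  "0 \<le> tau0_poly a b t \<Longrightarrow> phi_minus b a t (beta_star b a t) = beta_sstar a b t"
  by (simp add: phi_minus_def sqrt_phi_disc_beta_star)
    (simp add: beta_star_def beta_sstar_def tau0_poly_def algebra_simps power2_eq_square)

lemma phi_disc_four: "phi_disc a b t (4 * a) = (beta_star b a t / 2)^2"
  by (simp add: phi_disc_def beta_star_def power2_eq_square algebra_simps)

lemma phi_plus_four:
  "0 \<le> beta_star b a t \<Longrightarrow> phi_plus a b t (4 * a) = beta_star b a t"
  unfolding phi_plus_def phi_disc_four real_sqrt_abs by (simp add: beta_star_def)

lemma beta_threshold_iffs:
  assumes "0 < a" "0 \<le> b" "0 < t" "t < 1"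
  shows "(beta_lo a b t < 4 * a
           \<longleftrightarrow> (4 * a - t * beta_star b a t > 2 * a
                \<and> 2 * a > beta_sstar a b t - t * beta_star b a t))
       \<and> (beta_lo a b t < 4 * a \<longleftrightarrow> beta_sstar a b t < 4 * a)
       \<and> (beta_lo a b t < 4 * a \<longleftrightarrow> t < tau0 a b)"
  using beta_lo_less_iff[OF assms] less_tau0_iff[of a b t] beta_sstar_less_iff[of a b t]
    beta_star_gap_iff[of a t b] assms
  by blast

lemma beta_threshold_consequences:
  assumes "0 < a" "0 \<le> b" "0 < t" "t < 1" and "t < tau0 a b"
  shows "beta_lo a b t < 4 * a
       \<and> 0 < beta_star b a t \<and> beta_star b a t \<le> beta_hi b a t
       \<and> phi_plus b a t (beta_star b a t) = 4 * a
       \<and> 4 * a \<le> beta_hi a b t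
       \<and> beta_star b a t = phi_plus a b t (4 * a)
       \<and> beta_star b a t < beta_hi b a t
       \<and> beta_sstar a b t = phi_minus b a t (beta_star b a t)
       \<and> beta_sstar a b t < beta_lo a b t"
proof -
  have t2: "t^2 < 1" using assms by (simp add: abs_square_less_1)
  have poly: "0 < tau0_poly a b t" using less_tau0_iff assms by blast
  have star_pos: "0 < beta_star b a t" using assms by (simp add: beta_star_def add_nonneg_pos)
  have star_hi: "beta_star b a t < beta_hi b a t"
    using poly by (intro less_beta_hi_if_phi_disc_pos t2) (simp add: phi_disc_beta_star)
  have "4 * a < beta_hi a b t"
    using star_pos by (intro less_beta_hi_if_phi_disc_pos t2) (simp add: phi_disc_four)
  moreover have "beta_sstar a b t < beta_lo a b t"
  proof -
    have "t * beta_star b a t \<le> 2 * a"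
      using poly by (simp add: beta_star_def tau0_poly_def power2_eq_square algebra_simps)
    moreover have "t * beta_star b a t < t * beta_hi b a t" using star_hi assms by simp
    ultimately show ?thesis
      using t2 by (simp add: beta_lo_eq beta_sstar_def beta_star_def algebra_simps)
  qed
  ultimately show ?thesis
    using assms poly star_pos star_hi beta_lo_less_iff[OF assms(1-4)]
    by (simp add: phi_plus_beta_star phi_minus_beta_star phi_plus_four)
qed

lemma beta_defs_as_general:
  fixes N :: nat
  defines "m \<equiv> real N + 1"
  shows "beta1_lo N t = beta_lo m 1 t" "beta2_lo N t = beta_lo 1 m t"
    "beta1_hi N t = beta_hi m 1 t" "beta2_hi N t = beta_hi 1 m t"
    "beta1_star N t = beta_star m 1 t" "beta2_star N t = beta_star 1 m t"
    "beta1_sstar N t = beta_sstar m 1 t" "beta2_sstar N t = beta_sstar 1 m t"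
    "phi1_plus N t = phi_plus m 1 t" "phi2_plus N t = phi_plus 1 m t"
    "phi1_minus N t = phi_minus m 1 t" "phi2_minus N t = phi_minus 1 m t"
    "tau0_1 N = tau0 m 1" "tau0_2 N = tau0 1 m"
  by (simp_all add: m_def fun_eq_iff DD_def beta_disc_def beta1_lo_def beta2_lo_def beta_lo_def
      beta1_hi_def beta2_hi_def beta_hi_def beta1_star_def beta2_star_def beta_star_def
      beta1_sstar_def beta2_sstar_def beta_sstar_def phi1_plus_def phi2_plus_def phi_plus_def
      phi1_minus_def phi2_minus_def phi_minus_def phi_disc_def tau0_1_def tau0_2_def tau0_def
      algebra_simps)

theorem mainTheorem15:
  fixes N :: nat and t :: real
  assumes "N > 0" and "0 < t" and "t < 1"
  shows
   "((beta1_lo N t < 4 * (real N + 1)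
       \<longleftrightarrow> (4 * (real N + 1) - t * beta2_star N t > 2 * (real N + 1)
            \<and> 2 * (real N + 1) > beta1_sstar N t - t * beta2_star N t))
     \<and> (beta1_lo N t < 4 * (real N + 1) \<longleftrightarrow> beta1_sstar N t < 4 * (real N + 1))
     \<and> (beta1_lo N t < 4 * (real N + 1) \<longleftrightarrow> t < tau0_1 N))
    \<and> (t < tau0_1 N \<longrightarrow>
         beta1_lo N t < 4 * (real N + 1)
       \<and> 0 < beta2_star N t \<and> beta2_star N t \<le> beta2_hi N t
       \<and> phi2_plus N t (beta2_star N t) = 4 * (real N + 1)
       \<and> 4 * (real N + 1) \<le> beta1_hi N t
       \<and> beta2_star N t = phi1_plus N t (4 * (real N + 1))
       \<and> beta2_star N t < beta2_hi N t
       \<and> beta1_sstar N t = phi2_minus N t (beta2_star N t)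
       \<and> beta1_sstar N t < beta1_lo N t)
    \<and> ((beta2_lo N t < 4
       \<longleftrightarrow> (4 - t * beta1_star N t > 2 \<and> 2 > beta2_sstar N t - t * beta1_star N t))
     \<and> (beta2_lo N t < 4 \<longleftrightarrow> beta2_sstar N t < 4)
     \<and> (beta2_lo N t < 4 \<longleftrightarrow> t < tau0_2 N))
    \<and> (t < tau0_2 N \<longrightarrow>
         beta2_lo N t < 4
       \<and> 0 < beta1_star N t \<and> beta1_star N t \<le> beta1_hi N t
       \<and> phi1_plus N t (beta1_star N t) = 4
       \<and> 4 \<le> beta2_hi N t
       \<and> beta1_star N t = phi2_plus N t 4
       \<and> beta1_star N t < beta1_hi N t
       \<and> beta2_sstar N t = phi1_minus N t (beta1_star N t)
       \<and> beta2_sstar N t < beta2_lo N t)"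
proof -
  define m where "m = real N + 1"
  have pos: "0 < m" "0 \<le> (1::real)" "0 < (1::real)" "0 \<le> m" by (simp_all add: m_def)
  note part_i = beta_threshold_iffs[OF pos(1,2) assms(2,3)]
    beta_threshold_consequences[OF pos(1,2) assms(2,3)]
  note part_ii = beta_threshold_iffs[OF pos(3,4) assms(2,3), unfolded mult_1_right]
    beta_threshold_consequences[OF pos(3,4) assms(2,3), unfolded mult_1_right]
  show ?thesis
    unfolding beta_defs_as_general m_def[symmetric] using part_i part_ii by blast
qed

end
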